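(* For real $z\ge 10$ let $$c_2(z)=\sum_{\substack{n_1,n_2,n_3,n_4\le z\\ \sqrt{n_1}+\sqrt{n_2}=\sqrt{n_3}+\sqrt{n_4}}}\frac{d(n_1)d(n_2)d(n_3)d(n_4)\,(\sqrt{n_1}+\sqrt{n_2}+\sqrt{n_3}+\sqrt{n_4})}{(n_1n_2n_3n_4)^{3/4}},$$ the sum being over positive integers. Then $c_2(z)\ll\log^4 z$ uniformly for $z\ge 10$.
   Context: $d(n)$ denotes the number of positive divisors of $n$. $f\ll g$ means $|f|\le Cg$ for some absolute positive constant $C$. *)

theory Defs
  imports "HOL-Analysis.Analysis"
begin

definition divisor_count :: "nat \<Rightarrow> nat" where
  "divisor_count n = card {d. d dvd n}"

definition c2 :: "real \<Rightarrow> real" where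
  "c2 z = (\<Sum>(n1, n2, n3, n4) \<in> {(n1, n2, n3, n4).
              n1 \<in> {1..nat \<lfloor>z\<rfloor>} \<and> n2 \<in> {1..nat \<lfloor>z\<rfloor>} \<and>
              n3 \<in> {1..nat \<lfloor>z\<rfloor>} \<and> n4 \<in> {1..nat \<lfloor>z\<rfloor>} \<and>
              sqrt (real n1) + sqrt (real n2) = sqrt (real n3) + sqrt (real n4)}.
     real (divisor_count n1 * divisor_count n2 * divisor_count n3 * divisor_count n4)
       * (sqrt (real n1) + sqrt (real n2) + sqrt (real n3) + sqrt (real n4))
       / (real (n1 * n2 * n3 * n4)) powr (3/4))"

end

theory Submission
  imports Defs "HOL-Computational_Algebra.Squarefree" "HOL-Computational_Algebra.Nth_Powers"
begin

text \<open>
  The equation \<open>\<surd>n\<^sub>1 + \<surd>n\<^sub>2 = \<surd>n\<^sub>3 + \<surd>n\<^sub>4\<close> has two kinds of solutions: the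
  trivial ones \<open>{n\<^sub>1, n\<^sub>2} = {n\<^sub>3, n\<^sub>4}\<close>, and the parametrised ones
  \<open>(qa\<^sup>2, qb\<^sup>2, qc\<^sup>2, q(a + b - c)\<^sup>2)\<close> with \<open>c < a + b\<close> (squaring twice shows that
  \<open>n\<^sub>1n\<^sub>2\<close> and \<open>n\<^sub>3n\<^sub>4\<close> are squares, hence all four share a squarefree part).
  The trivial solutions contribute \<open>\<ll> (\<Sum>\<^sub>n\<^sub>\<le>\<^sub>z d(n)\<^sup>2/n)(\<Sum> n\<^sup>-\<^sup>5\<^sup>/\<^sup>4)\<close>, and
  \<open>\<Sum> d(n)\<^sup>2/n \<le> (\<Sum> 1/k)\<^sup>4 \<ll> log\<^sup>4 z\<close> because \<open>d(n)\<^sup>2\<close> is at most the four-fold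
  divisor function.  The parametrised solutions contribute \<open>O(1)\<close>: with
  \<open>d(n) \<ll> n\<^sup>1\<^sup>/\<^sup>8\<close> each summand is \<open>\<ll> q\<^sup>-\<^sup>2(abc)\<^sup>-\<^sup>5\<^sup>/\<^sup>4 + q\<^sup>-\<^sup>2(ab(a+b-c))\<^sup>-\<^sup>5\<^sup>/\<^sup>4\<close>,
  whose sum over all parameters converges.
\<close>

lemma divisor_count_pos: "n > 0 \<Longrightarrow> divisor_count n > 0"
  unfolding divisor_count_def by (subst card_gt_0_iff) auto

text \<open>The divisor function is multiplicative: divisors of \<open>a * b\<close> with coprime \<open>a, b\<close>
  are exactly the products of a divisor of \<open>a\<close> and a divisor of \<open>b\<close>, uniquely.\<close>
lemma divisor_count_mult_coprime:
  fixes a b :: nat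
  assumes "coprime a b" "a > 0" "b > 0"
  shows "divisor_count (a * b) = divisor_count a * divisor_count b"
proof -
  have eq: "{x. x dvd a * b} = (\<lambda>(x, y). x * y) ` ({x. x dvd a} \<times> {y. y dvd b})"
  proof
    show "{x. x dvd a * b} \<subseteq> (\<lambda>(x, y). x * y) ` ({x. x dvd a} \<times> {y. y dvd b})"
    proof
      fix e assume "e \<in> {x. x dvd a * b}"
      then obtain x y where "e = x * y" "x dvd a" "y dvd b" using division_decomp by blast
      thus "e \<in> (\<lambda>(x, y). x * y) ` ({x. x dvd a} \<times> {y. y dvd b})" by force
    qed
  qed (auto intro: mult_dvd_mono)
  have inj: "inj_on (\<lambda>(x, y). x * y) ({x. x dvd a} \<times> {y. y dvd b})"
  proof (rule inj_onI, clarify)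
    fix x y x' y' :: nat
    assume h: "x dvd a" "y dvd b" "x' dvd a" "y' dvd b" "x * y = x' * y'"
    have "coprime x y'" "coprime x' y" using assms(1) h by (meson coprime_divisors)+
    moreover have "x dvd x' * y'" "x' dvd x * y" using h(5) by (metis dvd_triv_left)+
    ultimately have "x dvd x'" "x' dvd x" by (simp_all add: coprime_dvd_mult_left_iff)
    hence "x = x'" by (simp add: dvd_antisym)
    moreover have "x > 0" using h(1) assms by (auto intro!: Nat.gr0I)
    ultimately show "x = x' \<and> y = y'" using h(5) by simp
  qed
  show ?thesis unfolding divisor_count_def eq
    by (simp add: card_image[OF inj] card_cartesian_product)
qed

lemma divisor_count_prime_power:
  fixes p :: nat assumes "prime p"
  shows "divisor_count (p ^ k) = k + 1"
proof -
  have "{x. x dvd p ^ k} = (\<lambda>i. p ^ i) ` {0..k}"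
    using divides_primepow_nat[OF assms] by auto
  moreover have "inj_on (\<lambda>i. p ^ i) {0..k}"
    using assms prime_gt_1_nat by (auto intro!: inj_onI simp: power_inject_exp)
  ultimately show ?thesis unfolding divisor_count_def by (simp add: card_image)
qed

text \<open>Local factors for the bound \<open>d(n)\<^sup>8 \<le> K n\<close>: the factor \<open>(k+1)\<^sup>8\<close> of a prime power
  \<open>p\<^sup>k\<close> is at most \<open>8\<^sup>8 p\<^sup>k\<close> for every prime, and at most \<open>p\<^sup>k\<close> once \<open>p \<ge> 256\<close>.\<close>
lemma succ_pow8_le_small: "(k + 1 :: nat) ^ 8 \<le> 8 ^ 8 * 2 ^ k"
proof -
  have "k div 8 + 1 \<le> 2 ^ (k div 8)" using less_exp[of "k div 8"] by (simp add: Suc_leI)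
  hence "k + 1 \<le> 8 * 2 ^ (k div 8)" by linarith
  hence "(k + 1) ^ 8 \<le> (8 * 2 ^ (k div 8)) ^ 8" by (rule power_mono) simp
  also have "\<dots> = 8 ^ 8 * 2 ^ (8 * (k div 8))"
    by (simp only: power_mult_distrib power_mult[symmetric] mult.commute)
  also have "\<dots> \<le> 8 ^ 8 * 2 ^ k" by (intro mult_left_mono power_increasing) auto
  finally show ?thesis .
qed

lemma succ_pow8_le_large: assumes "256 \<le> p" shows "(k + 1 :: nat) ^ 8 \<le> p ^ k"
proof -
  have "(k + 1) ^ 8 \<le> (2 ^ k) ^ 8" using less_exp[of k] by (intro power_mono) (auto simp: Suc_leI)
  also have "\<dots> = (2 ^ 8) ^ k" by (simp only: power_mult[symmetric] mult.commute)
  also have "\<dots> \<le> p ^ k" using assms by (intro power_mono) simp_all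
  finally show ?thesis .
qed

text \<open>Prime divisors below 256: the only primes for which \<open>(k+1)\<^sup>8 \<le> p\<^sup>k\<close> can fail.\<close>
definition small_prime_divisors :: "nat \<Rightarrow> nat set" where
  "small_prime_divisors n = {p. prime p \<and> p < 256 \<and> p dvd n}"

lemma small_prime_divisors_subset: "small_prime_divisors n \<subseteq> {..<256}"
  by (auto simp: small_prime_divisors_def)

lemma prime_power_split:
  fixes n :: nat assumes "n > 1"
  obtains p k m where "prime p" "k > 0" "n = p ^ k * m" "\<not> p dvd m" "0 < m" "m < n"
proof -
  obtain p where p: "prime p" "p dvd n" using prime_factor_nat assms by (metis less_irrefl)
  define k where "k = multiplicity p n"
  define m where "m = n div p ^ k"
  have n_eq: "n = p ^ k * m" unfolding m_def k_def by (simp add: multiplicity_dvd)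
  have k_pos: "k > 0" unfolding k_def using p assms by (simp add: prime_multiplicity_gt_zero_iff)
  have m_pos: "m > 0" using n_eq assms by (auto intro!: Nat.gr0I)
  have "\<not> p dvd m"
  proof
    assume "p dvd m"
    hence "p ^ Suc k dvd n" using n_eq by (simp add: mult_dvd_mono)
    hence "multiplicity p n \<ge> Suc k" using p assms by (intro multiplicity_geI) auto
    thus False unfolding k_def by simp
  qed
  moreover have "p ^ 1 \<le> p ^ k" using k_pos prime_ge_2_nat[OF p(1)] by (intro power_increasing) auto
  hence "1 * m < p ^ k * m" using prime_ge_2_nat[OF p(1)] m_pos by (intro mult_strict_right_mono) auto
  ultimately show thesis using that p(1) k_pos n_eq m_pos by simp
qed

lemma divisor_count_mult_prime_power:
  assumes "prime p" "\<not> p dvd m" "m > 0"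
  shows "divisor_count (p ^ k * m) = (k + 1) * divisor_count m"
proof -
  have "coprime (p ^ k) m" using assms by (simp add: prime_imp_coprime_nat coprime_power_left_iff)
  thus ?thesis using assms divisor_count_mult_coprime divisor_count_prime_power prime_gt_0_nat
    by simp
qed

lemma small_prime_divisors_mult_prime_power:
  assumes p: "prime p" "k > 0"
  shows "small_prime_divisors (p ^ k * m) = small_prime_divisors m \<union> (if p < 256 then {p} else {})"
proof -
  have "q dvd p ^ k * m \<longleftrightarrow> q = p \<or> q dvd m" if "prime q" for q
  proof -
    have "q dvd p ^ k * m \<longleftrightarrow> q dvd p ^ k \<or> q dvd m" using that by (simp add: prime_dvd_mult_iff)
    also have "q dvd p ^ k \<longleftrightarrow> q = p" using that p primes_dvd_imp_eq
      by (auto simp: prime_dvd_power_iff)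
    finally show ?thesis .
  qed
  thus ?thesis unfolding small_prime_divisors_def using p by auto
qed

text \<open>Induction on \<open>n\<close>, splitting off one full prime power \<open>p\<^sup>k\<close>: by the local factor
  bounds, only the primes below 256 cost a constant factor \<open>8\<^sup>8\<close>.\<close>
lemma divisor_count_pow8_le:
  "n > 0 \<Longrightarrow> divisor_count n ^ 8 \<le> (8 ^ 8) ^ card (small_prime_divisors n) * n"
proof (induction n rule: less_induct)
  case (less n)
  show ?case
  proof (cases "n = 1")
    case True
    have "{x. x dvd (1::nat)} = {1}" by auto
    thus ?thesis using True by (simp add: divisor_count_def)
  next
    case False
    then obtain p k m where p: "prime p" and k: "k > 0" and n_eq: "n = p ^ k * m"
      and p_m: "\<not> p dvd m" "0 < m" "m < n"
      using prime_power_split[of n] less.prems by (metis less_one linorder_neqE_nat not_less0)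
    have IH: "divisor_count m ^ 8 \<le> (8 ^ 8) ^ card (small_prime_divisors m) * m"
      using less.IH[OF p_m(3,2)] .
    have dcn: "divisor_count n ^ 8 = (k + 1) ^ 8 * divisor_count m ^ 8"
      unfolding n_eq divisor_count_mult_prime_power[OF p p_m(1,2)] by (simp only: power_mult_distrib)
    have spd: "small_prime_divisors n = small_prime_divisors m \<union> (if p < 256 then {p} else {})"
      unfolding n_eq by (rule small_prime_divisors_mult_prime_power[OF p k])
    have p2: "p \<ge> 2" using p prime_ge_2_nat by blast
    show ?thesis
    proof (cases "p < 256")
      case True
      have "p \<notin> small_prime_divisors m" using p_m(1) by (simp add: small_prime_divisors_def)
      moreover have "finite (small_prime_divisors m)"
        using finite_subset[OF small_prime_divisors_subset] by simp
      moreover have "divisor_count n ^ 8 \<le> (8 ^ 8 * p ^ k) * ((8 ^ 8) ^ card (small_prime_divisors m) * m)"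
        unfolding dcn using succ_pow8_le_small[of k] power_mono[OF p2, of k]
        by (intro mult_mono IH) (auto intro: order_trans)
      ultimately show ?thesis using spd True by (simp add: n_eq mult_ac)
    next
      case False
      have "divisor_count n ^ 8 \<le> p ^ k * ((8 ^ 8) ^ card (small_prime_divisors m) * m)"
        unfolding dcn using False by (intro mult_mono succ_pow8_le_large IH) auto
      thus ?thesis using spd False by (simp add: n_eq mult_ac)
    qed
  qed
qed

text \<open>The classical bound \<open>d(n) \<ll> n\<^sup>1\<^sup>/\<^sup>8\<close> (any exponent below \<open>1/4\<close> would do below).\<close>
lemma divisor_count_le_root8:
  obtains M :: real where "M > 0" "\<And>n. n > 0 \<Longrightarrow> real (divisor_count n) \<le> M * real n powr (1/8)"
proof -
  define c :: nat where "c = 8 ^ 8"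
  define K :: nat where "K = c ^ 256"
  have "c > 0" by (simp add: c_def)
  hence K_pos: "K > 0" unfolding K_def by simp
  have "real (divisor_count n) \<le> real K powr (1/8) * real n powr (1/8)" if n: "n > 0" for n
  proof -
    have "card (small_prime_divisors n) \<le> 256"
      using card_mono[OF _ small_prime_divisors_subset] by simp
    hence "c ^ card (small_prime_divisors n) \<le> K"
      unfolding K_def using \<open>c > 0\<close> by (intro power_increasing) auto
    hence "divisor_count n ^ 8 \<le> K * n"
      using divisor_count_pow8_le[OF n, folded c_def] by (meson le_trans mult_le_mono1)
    hence "real (divisor_count n ^ 8) \<le> real (K * n)" by (simp only: of_nat_le_iff)
    hence "real (divisor_count n ^ 8) powr (1/8) \<le> real (K * n) powr (1/8)"
      by (intro powr_mono2) auto
    moreover have "real (divisor_count n ^ 8) powr (1/8) = real (divisor_count n)"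
    proof -
      have "real (divisor_count n ^ 8) = real (divisor_count n) powr 8"
        using divisor_count_pos[OF n] by (simp add: powr_realpow)
      thus ?thesis by (simp only: powr_powr) simp
    qed
    ultimately show ?thesis by (simp add: powr_mult)
  qed
  moreover have "real K powr (1/8) > 0" using K_pos by simp
  ultimately show thesis using that by blast
qed

text \<open>If \<open>N b\<^sup>2\<close> is a square then so is \<open>N\<close> (all prime multiplicities of \<open>N\<close> are even).\<close>
lemma square_of_mult_square:
  fixes N b a :: nat
  assumes "b > 0" "N * b ^ 2 = a ^ 2"
  shows "\<exists>t. N = t ^ 2"
proof (cases "N = 0")
  case True thus ?thesis by simp
next
  case False
  hence a0: "a \<noteq> 0" using assms by (metis mult_is_0 power_not_zero zero_power2 not_gr0)
  have "is_nth_power 2 N" unfolding is_nth_power_conv_multiplicity_nat[OF zero_less_numeral]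
  proof (intro allI impI)
    fix p :: nat assume p: "prime p"
    have "multiplicity p (N * b ^ 2) = multiplicity p N + 2 * multiplicity p b"
      using p False assms(1)
      by (simp add: prime_elem_multiplicity_mult_distrib prime_elem_multiplicity_power_distrib)
    moreover have "multiplicity p (a ^ 2) = 2 * multiplicity p a"
      using p a0 by (simp add: prime_elem_multiplicity_power_distrib)
    ultimately have "multiplicity p N + 2 * multiplicity p b = 2 * multiplicity p a"
      using assms(2) by simp
    thus "2 dvd multiplicity p N" by presburger
  qed
  thus ?thesis by (auto elim: is_nth_powerE)
qed

lemma square_of_int_mult_square:
  fixes N :: nat and R Q :: int
  assumes "R \<noteq> 0" "int N * R ^ 2 = Q ^ 2"
  shows "\<exists>t. N = t ^ 2"
proof -
  have "int (N * (nat \<bar>R\<bar>) ^ 2) = int ((nat \<bar>Q\<bar>) ^ 2)"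
    using assms(2) by (simp add: power2_eq_square abs_mult[symmetric])
  hence "N * (nat \<bar>R\<bar>) ^ 2 = (nat \<bar>Q\<bar>) ^ 2" by (simp only: of_nat_eq_iff)
  thus ?thesis using assms(1) by (intro square_of_mult_square[of "nat \<bar>R\<bar>"]) auto
qed

lemma squarefree_part_eq_if_mult_square:
  fixes x y t :: nat
  assumes "x > 0" "y > 0" "x * y = t ^ 2"
  shows "squarefree_part x = squarefree_part y"
proof -
  have t0: "t \<noteq> 0" using assms by (metis mult_is_0 zero_power2 not_gr0)
  have "normalize (squarefree_part x) = normalize (squarefree_part y)"
  proof (rule multiplicity_eq_imp_eq)
    fix p :: nat assume p: "prime p"
    have "multiplicity p x + multiplicity p y = 2 * multiplicity p t"
      using p assms t0 prime_elem_multiplicity_mult_distrib[of p x y]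
        prime_elem_multiplicity_power_distrib[of p t 2]
      by simp
    hence "multiplicity p x mod 2 = multiplicity p y mod 2" by presburger
    thus "multiplicity p (squarefree_part x) = multiplicity p (squarefree_part y)"
      using p by (simp add: prime_multiplicity_squarefree_part)
  qed auto
  thus ?thesis by simp
qed

lemma squarefree_part_idem: "squarefree_part (squarefree_part (x::nat)) = squarefree_part x"
proof -
  have "normalize (squarefree_part (squarefree_part x)) = normalize (squarefree_part x)"
    by (rule multiplicity_eq_imp_eq) (auto simp: prime_multiplicity_squarefree_part)
  thus ?thesis by simp
qed

lemma sqrt_squarefree_decompose:
  "sqrt (real (x::nat)) = sqrt (real (squarefree_part x)) * real (square_part x)"
proof -
  have "real x = real (squarefree_part x) * real (square_part x) ^ 2"
    by (subst squarefree_decompose) simp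
  thus ?thesis by (simp add: real_sqrt_mult)
qed

text \<open>Squaring \<open>\<surd>n\<^sub>1 + \<surd>n\<^sub>2 = \<surd>n\<^sub>3 + \<surd>n\<^sub>4\<close> twice: unless \<open>n\<^sub>1 + n\<^sub>2 = n\<^sub>3 + n\<^sub>4\<close>,
  the products \<open>n\<^sub>1n\<^sub>2\<close> and \<open>n\<^sub>3n\<^sub>4\<close> are perfect squares.\<close>
lemma products_square_if_sqrt_sum_eq:
  fixes n1 n2 n3 n4 :: nat
  assumes eq: "sqrt (real n1) + sqrt (real n2) = sqrt (real n3) + sqrt (real n4)"
    and R_nz: "int n3 + int n4 - int n1 - int n2 \<noteq> 0"
  shows "\<exists>A. n1 * n2 = A ^ 2" "\<exists>B. n3 * n4 = B ^ 2"
proof -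
  define x1 where "x1 = sqrt (real n1)"
  define x2 where "x2 = sqrt (real n2)"
  define x3 where "x3 = sqrt (real n3)"
  define x4 where "x4 = sqrt (real n4)"
  define R :: int where "R = int n3 + int n4 - int n1 - int n2"
  have s: "x1 ^ 2 = real n1" "x2 ^ 2 = real n2" "x3 ^ 2 = real n3" "x4 ^ 2 = real n4"
    by (simp_all add: x1_def x2_def x3_def x4_def)
  have p12: "(x1 * x2) ^ 2 = real (n1 * n2)" and p34: "(x3 * x4) ^ 2 = real (n3 * n4)"
    using s by (simp_all add: power_mult_distrib)
  have "(x1 + x2) ^ 2 = (x3 + x4) ^ 2" using eq by (simp add: x1_def x2_def x3_def x4_def)
  hence E1: "2 * (x1 * x2) = real_of_int R + 2 * (x3 * x4)"
    unfolding R_def using s by (simp add: power2_eq_square algebra_simps)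
  hence "(2 * (x1 * x2)) ^ 2 = (real_of_int R + 2 * (x3 * x4)) ^ 2" by simp
  hence "real_of_int (4 * R) * (x3 * x4) = real_of_int (4 * int (n1 * n2) - 4 * int (n3 * n4) - R ^ 2)"
    using p12 p34 by (simp add: power2_eq_square algebra_simps)
  hence "(real_of_int (4 * R)) ^ 2 * (x3 * x4) ^ 2
      = (real_of_int (4 * int (n1 * n2) - 4 * int (n3 * n4) - R ^ 2)) ^ 2"
    by (metis power_mult_distrib)
  hence "real_of_int (int (n3 * n4) * (4 * R) ^ 2)
      = real_of_int ((4 * int (n1 * n2) - 4 * int (n3 * n4) - R ^ 2) ^ 2)"
    using p34 by (simp add: mult.commute)
  hence "int (n3 * n4) * (4 * R) ^ 2 = (4 * int (n1 * n2) - 4 * int (n3 * n4) - R ^ 2) ^ 2"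
    by (simp only: of_int_eq_iff)
  moreover have "4 * R \<noteq> 0" using R_nz by (simp add: R_def)
  ultimately obtain B where B: "n3 * n4 = B ^ 2" using square_of_int_mult_square by blast
  thus "\<exists>B. n3 * n4 = B ^ 2" ..
  have "x3 * x4 = sqrt (real (n3 * n4))" by (simp add: x3_def x4_def real_sqrt_mult)
  also have "\<dots> = real B" using B by simp
  finally have "x3 * x4 = real B" .
  hence "(2 * (x1 * x2)) ^ 2 = (real_of_int R + 2 * real B) ^ 2" using E1 by simp
  hence "real_of_int (int (n1 * n2) * 2 ^ 2) = real_of_int ((R + 2 * int B) ^ 2)"
    using p12 by (simp add: power_mult_distrib mult.commute)
  hence "int (n1 * n2) * 2 ^ 2 = (R + 2 * int B) ^ 2" by (simp only: of_int_eq_iff)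
  thus "\<exists>A. n1 * n2 = A ^ 2" using square_of_int_mult_square[of 2] by simp
qed

text \<open>If \<open>n\<^sub>1 + n\<^sub>2 = n\<^sub>3 + n\<^sub>4\<close>, the equation forces \<open>\<surd>n\<^sub>1\<surd>n\<^sub>2 = \<surd>n\<^sub>3\<surd>n\<^sub>4\<close>,
  so \<open>{n\<^sub>1, n\<^sub>2} = {n\<^sub>3, n\<^sub>4}\<close>: the solution is trivial.\<close>
lemma trivial_if_sqrt_sum_eq:
  fixes n1 n2 n3 n4 :: nat
  assumes eq: "sqrt (real n1) + sqrt (real n2) = sqrt (real n3) + sqrt (real n4)"
    and sum_eq: "n1 + n2 = n3 + n4"
  shows "(n1 = n3 \<and> n2 = n4) \<or> (n1 = n4 \<and> n2 = n3)"
proof -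
  define x1 where "x1 = sqrt (real n1)"
  define x2 where "x2 = sqrt (real n2)"
  define x3 where "x3 = sqrt (real n3)"
  define x4 where "x4 = sqrt (real n4)"
  have e: "x1 + x2 = x3 + x4" using eq by (simp add: x1_def x2_def x3_def x4_def)
  have s: "x1 ^ 2 = real n1" "x2 ^ 2 = real n2" "x3 ^ 2 = real n3" "x4 ^ 2 = real n4"
    by (simp_all add: x1_def x2_def x3_def x4_def)
  have "(x1 + x2) ^ 2 = (x3 + x4) ^ 2" using e by simp
  hence m: "x1 * x2 = x3 * x4"
    using s sum_eq by (simp add: power2_eq_square algebra_simps flip: of_nat_add)
  have "(x1 - x3) * (x1 - x4) = x1 * x1 - x1 * (x3 + x4) + x3 * x4" by (simp add: algebra_simps)
  also have "\<dots> = x1 * x1 - x1 * (x1 + x2) + x1 * x2" using e m by simp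
  also have "\<dots> = 0" by (simp add: algebra_simps)
  finally have "x1 = x3 \<or> x1 = x4" by simp
  thus ?thesis using e by (auto simp: x1_def x2_def x3_def x4_def)
qed

text \<open>The non-trivial solutions are parametrised: all four numbers share a squarefree part
  \<open>q\<close>, and the equation becomes \<open>a + b = c + d\<close> for their square roots \<open>a, b, c, d\<close>.\<close>
definition param_quadruple :: "nat \<times> nat \<times> nat \<times> nat \<Rightarrow> nat \<times> nat \<times> nat \<times> nat" where
  "param_quadruple = (\<lambda>(q, a, b, c). (q * a ^ 2, q * b ^ 2, q * c ^ 2, q * (a + b - c) ^ 2))"

lemma param_if_sqrt_sum_eq:
  fixes n1 n2 n3 n4 :: nat
  assumes pos: "n1 > 0" "n2 > 0" "n3 > 0" "n4 > 0"
    and eq: "sqrt (real n1) + sqrt (real n2) = sqrt (real n3) + sqrt (real n4)"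
    and A: "n1 * n2 = A ^ 2" and B: "n3 * n4 = B ^ 2"
  shows "\<exists>q a b c. 0 < q \<and> 0 < a \<and> 0 < b \<and> 0 < c \<and> c < a + b \<and>
           (n1, n2, n3, n4) = param_quadruple (q, a, b, c)"
proof -
  define q where "q = squarefree_part n1"
  define q' where "q' = squarefree_part n3"
  define a where "a = square_part n1"
  define b where "b = square_part n2"
  define c where "c = square_part n3"
  define d where "d = square_part n4"
  have q2: "squarefree_part n2 = q"
    unfolding q_def using squarefree_part_eq_if_mult_square[OF pos(1,2) A] by simp
  have q4: "squarefree_part n4 = q'"
    unfolding q'_def using squarefree_part_eq_if_mult_square[OF pos(3,4) B] by simp
  have n_eq: "n1 = q * a ^ 2" "n2 = q * b ^ 2" "n3 = q' * c ^ 2" "n4 = q' * d ^ 2"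
    using squarefree_decompose[of n1] squarefree_decompose[of n2]
      squarefree_decompose[of n3] squarefree_decompose[of n4] q2 q4
    unfolding a_def b_def c_def d_def by (simp_all add: q_def q'_def)
  have abcd_pos: "a > 0" "b > 0" "c > 0" "d > 0"
    unfolding a_def b_def c_def d_def using pos by (auto intro!: Nat.gr0I)
  have q_pos: "q > 0" "q' > 0"
    unfolding q_def q'_def using squarefree_part_nonzero by (auto simp del: squarefree_part_nonzero)
  have "sqrt (real q) * real (a + b) = sqrt (real q') * real (c + d)"
    using eq sqrt_squarefree_decompose[of n1] sqrt_squarefree_decompose[of n2]
      sqrt_squarefree_decompose[of n3] sqrt_squarefree_decompose[of n4] q2 q4
    unfolding q_def q'_def a_def b_def c_def d_def by (simp add: algebra_simps)
  hence "(sqrt (real q) * real (a + b)) ^ 2 = (sqrt (real q') * real (c + d)) ^ 2" by simp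
  hence "real (q * (a + b) ^ 2) = real (q' * (c + d) ^ 2)" by (simp add: power_mult_distrib)
  hence qq: "q * (a + b) ^ 2 = q' * (c + d) ^ 2" by (simp only: of_nat_eq_iff)
  hence "(q * q') * (a + b) ^ 2 = (q' * (c + d)) ^ 2" by (simp add: power2_eq_square mult_ac)
  then obtain t where "q * q' = t ^ 2" using square_of_mult_square[of "a + b"] abcd_pos by auto
  hence "squarefree_part q = squarefree_part q'"
    using squarefree_part_eq_if_mult_square q_pos by blast
  hence q_eq: "q = q'" unfolding q_def q'_def by (simp add: squarefree_part_idem)
  hence "(a + b) ^ 2 = (c + d) ^ 2" using qq q_pos by simp
  hence "a + b = c + d" by (simp add: power2_eq_iff_nonneg)
  thus ?thesis using abcd_pos q_pos n_eq q_eq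
    by (intro exI[of _ q] exI[of _ a] exI[of _ b] exI[of _ c]) (auto simp: param_quadruple_def)
qed

lemma sqrt_sum_eq_cases:
  fixes n1 n2 n3 n4 :: nat
  assumes pos: "n1 > 0" "n2 > 0" "n3 > 0" "n4 > 0"
    and eq: "sqrt (real n1) + sqrt (real n2) = sqrt (real n3) + sqrt (real n4)"
  shows "(n1 = n3 \<and> n2 = n4) \<or> (n1 = n4 \<and> n2 = n3) \<or>
    (\<exists>q a b c. 0 < q \<and> 0 < a \<and> 0 < b \<and> 0 < c \<and> c < a + b \<and>
       (n1, n2, n3, n4) = param_quadruple (q, a, b, c))"
proof (cases "n1 + n2 = n3 + n4")
  case True
  thus ?thesis using trivial_if_sqrt_sum_eq[OF eq] by blast
next
  case False
  hence "int n3 + int n4 - int n1 - int n2 \<noteq> 0" by linarith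
  from products_square_if_sqrt_sum_eq[OF eq this]
  obtain A B where "n1 * n2 = A ^ 2" "n3 * n4 = B ^ 2" by blast
  thus ?thesis using param_if_sqrt_sum_eq[OF pos eq] by blast
qed

lemma partial_zeta_bounded:
  fixes s :: real assumes "s > 1"
  obtains P where "\<And>N. (\<Sum>k = 1..N. real k powr (-s)) \<le> P"
proof
  have "summable (\<lambda>n. real n powr (-s))" using assms by (subst summable_real_powr_iff) simp
  thus "(\<Sum>k = 1..N. real k powr (-s)) \<le> (\<Sum>n. real n powr (-s))" for N
    by (intro sum_le_suminf) auto
qed

text \<open>\<open>H\<^sub>n \<le> 1 + log n\<close>, from the monotonicity of \<open>H\<^sub>n - log n\<close>.\<close>
lemma harm_le_one_plus_ln: "n > 0 \<Longrightarrow> (harm n :: real) \<le> 1 + ln (real n)"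
  using euler_mascheroni_sequence_decreasing[of 1 n] by (simp add: harm_def)

text \<open>For \<open>z \<ge> 10\<close> we have \<open>log z \<ge> 1\<close> and \<open>H\<^sub>\<lfloor>\<^sub>z\<^sub>\<rfloor> \<le> 2 log z\<close>; hence a bound of the shape
  \<open>A H\<^sub>\<lfloor>\<^sub>z\<^sub>\<rfloor>\<^sup>4 + B\<close> is \<open>\<ll> log\<^sup>4 z\<close>.\<close>
lemma harm_bound_le_log4:
  fixes A B z :: real assumes "A \<ge> 0" "B \<ge> 0" and z: "z \<ge> 10"
  shows "A * harm (nat \<lfloor>z\<rfloor>) ^ 4 + B \<le> (16 * A + B) * ln z ^ 4"
proof -
  have ln_ge_1: "1 \<le> ln z" using exp_le z by (subst ln_ge_iff) auto
  have "ln (real (nat \<lfloor>z\<rfloor>)) \<le> ln z" using z by (intro ln_mono) linarith+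
  moreover have "nat \<lfloor>z\<rfloor> > 0" using z by linarith
  ultimately have "harm (nat \<lfloor>z\<rfloor>) \<le> 2 * ln z"
    using harm_le_one_plus_ln[of "nat \<lfloor>z\<rfloor>"] ln_ge_1 by linarith
  hence "harm (nat \<lfloor>z\<rfloor>) ^ 4 \<le> (2 * ln z) ^ 4" using harm_nonneg by (intro power_mono) auto
  hence "A * harm (nat \<lfloor>z\<rfloor>) ^ 4 \<le> A * (16 * ln z ^ 4)"
    using assms(1) by (intro mult_left_mono) (simp_all add: power_mult_distrib)
  moreover have "B \<le> B * ln z ^ 4" using assms(2) ln_ge_1 by (simp add: mult_le_cancel_left1)
  ultimately show ?thesis by (simp add: algebra_simps)
qed

lemma sum_cartesian2:
  fixes f g :: "nat \<Rightarrow> real"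
  shows "(\<Sum>(a, b) \<in> A \<times> B. f a * g b) = sum f A * sum g B"
  by (simp add: sum.cartesian_product[symmetric] sum_product)

lemma sum_cartesian4:
  fixes f g h k :: "nat \<Rightarrow> real"
  shows "(\<Sum>(a, b, c, d) \<in> A \<times> B \<times> C \<times> D. f a * g b * h c * k d)
       = sum f A * sum g B * sum h C * sum k D"
proof -
  have "(\<Sum>(a, b, c, d) \<in> A \<times> B \<times> C \<times> D. f a * g b * h c * k d)
      = (\<Sum>a\<in>A. \<Sum>b\<in>B. \<Sum>c\<in>C. \<Sum>d\<in>D. f a * g b * h c * k d)"
    by (simp add: sum.cartesian_product)
  also have "\<dots> = sum f A * sum g B * sum h C * sum k D"
    by (simp only: sum_distrib_left[symmetric] sum_distrib_right[symmetric])
  finally show ?thesis .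
qed

text \<open>A pair \<open>(x, u)\<close> of divisors of \<open>n\<close> determines a factorisation \<open>n = \<alpha>\<beta>\<gamma>\<delta>\<close> with
  \<open>x = \<alpha>\<beta>\<close>, \<open>u = \<alpha>\<gamma>\<close>, \<open>\<alpha> = gcd x u\<close>; this is how \<open>d(n)\<^sup>2\<close> is compared with the
  four-fold divisor function.\<close>
definition divisor_pair_split :: "nat \<times> nat \<times> nat \<Rightarrow> nat \<times> nat \<times> nat \<times> nat" where
  "divisor_pair_split = (\<lambda>(n, x, u). (gcd x u, x div gcd x u, u div gcd x u, (n div x) div (u div gcd x u)))"

lemma divisor_pair_split_props:
  fixes n x u :: nat
  assumes n: "n > 0" and x: "x dvd n" and u: "u dvd n"
    and split: "divisor_pair_split (n, x, u) = (\<alpha>, \<beta>, \<gamma>, \<delta>)"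
  shows "\<alpha> > 0" "\<beta> > 0" "\<gamma> > 0" "\<delta> > 0" "\<alpha> * \<beta> * \<gamma> * \<delta> = n" "x = \<alpha> * \<beta>" "u = \<alpha> * \<gamma>"
proof -
  have defs: "\<alpha> = gcd x u" "\<beta> = x div gcd x u" "\<gamma> = u div gcd x u" "\<delta> = (n div x) div (u div gcd x u)"
    using split by (auto simp: divisor_pair_split_def)
  have x0: "x > 0" and u0: "u > 0" using x u n by (auto intro!: Nat.gr0I)
  show a0: "\<alpha> > 0" using x0 defs by simp
  show xe: "x = \<alpha> * \<beta>" and ue: "u = \<alpha> * \<gamma>" using defs by simp_all
  show "\<beta> > 0" "\<gamma> > 0" using xe x0 ue u0 by (auto intro!: Nat.gr0I)
  define y where "y = n div x"
  have ny: "n = x * y" unfolding y_def using x by simp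
  have "coprime \<beta> \<gamma>" unfolding defs using x0 by (intro div_gcd_coprime) simp
  moreover have "\<alpha> * \<gamma> dvd \<alpha> * (\<beta> * y)" using u ue xe ny by (simp add: mult.assoc)
  hence "\<gamma> dvd \<beta> * y" using a0 by simp
  ultimately have "\<gamma> dvd y" by (metis coprime_commute coprime_dvd_mult_right_iff)
  hence ye: "y = \<gamma> * \<delta>" unfolding defs y_def[symmetric] by (simp add: defs(3)[symmetric])
  show "\<delta> > 0" using ye ny n by (auto intro!: Nat.gr0I)
  show "\<alpha> * \<beta> * \<gamma> * \<delta> = n" using ny xe ye by (simp add: mult.assoc)
qed

lemma divisor_pair_split_inj:
  "inj_on divisor_pair_split {(n, x, u). n > 0 \<and> x dvd n \<and> u dvd n}"
proof (rule inj_onI)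
  fix w w' assume w: "w \<in> {(n, x, u). n > 0 \<and> x dvd n \<and> u dvd n}"
    and w': "w' \<in> {(n, x, u). n > 0 \<and> x dvd n \<and> u dvd n}"
    and eq: "divisor_pair_split w = divisor_pair_split w'"
  obtain n x u n' x' u' where ww: "w = (n, x, u)" "w' = (n', x', u')" by (cases w, cases w')
  have h: "n > 0" "x dvd n" "u dvd n" "n' > 0" "x' dvd n'" "u' dvd n'" using w w' ww by auto
  obtain \<alpha> \<beta> \<gamma> \<delta> where s: "divisor_pair_split (n, x, u) = (\<alpha>, \<beta>, \<gamma>, \<delta>)"
    by (cases "divisor_pair_split (n, x, u)") auto
  note p = divisor_pair_split_props[OF h(1-3) s]
  have s': "divisor_pair_split (n', x', u') = (\<alpha>, \<beta>, \<gamma>, \<delta>)" using eq s ww by simp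
  note p' = divisor_pair_split_props[OF h(4-6) s']
  show "w = w'" using p(5-7) p'(5-7) ww by simp
qed

lemma divisor_pair_split_bounded:
  assumes "n \<in> {1..N}" "x dvd n" "u dvd n"
  shows "divisor_pair_split (n, x, u) \<in> {1..N} \<times> {1..N} \<times> {1..N} \<times> {1..N}"
proof -
  obtain \<alpha> \<beta> \<gamma> \<delta> where s: "divisor_pair_split (n, x, u) = (\<alpha>, \<beta>, \<gamma>, \<delta>)"
    by (cases "divisor_pair_split (n, x, u)") auto
  have n: "n > 0" using assms by simp
  note p = divisor_pair_split_props[OF n assms(2,3) s]
  have "\<alpha> dvd n" "\<beta> dvd n" "\<gamma> dvd n" "\<delta> dvd n" unfolding p(5)[symmetric] by auto
  hence "\<alpha> \<le> n" "\<beta> \<le> n" "\<gamma> \<le> n" "\<delta> \<le> n" using n by (auto intro: dvd_imp_le)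
  thus ?thesis using s p(1-4) assms(1) by auto
qed

text \<open>Mean value of \<open>d(n)\<^sup>2/n\<close>: since \<open>d(n)\<^sup>2 \<le> d\<^sub>4(n)\<close>, the sum is at most
  \<open>(\<Sum>\<^sub>k\<^sub>\<le>\<^sub>N 1/k)\<^sup>4\<close>.\<close>
lemma sum_divisor_count_sq_le:
  "(\<Sum>n = 1..N. real (divisor_count n) ^ 2 / real n) \<le> harm N ^ 4"
proof -
  define W where "W = (SIGMA n:{1..N}. {x. x dvd n} \<times> {u. u dvd n})"
  define F where "F = (\<lambda>(\<alpha>::nat, \<beta>::nat, \<gamma>::nat, \<delta>::nat). 1 / real (\<alpha> * \<beta> * \<gamma> * \<delta>))"
  have inj: "inj_on divisor_pair_split W"
    by (rule inj_on_subset[OF divisor_pair_split_inj]) (auto simp: W_def)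
  have "(\<Sum>n = 1..N. real (divisor_count n) ^ 2 / real n)
      = (\<Sum>n = 1..N. \<Sum>p \<in> {x. x dvd n} \<times> {u. u dvd n}. 1 / real n)"
    by (intro sum.cong) (auto simp: divisor_count_def card_cartesian_product power2_eq_square)
  also have "\<dots> = (\<Sum>(n, p) \<in> W. 1 / real n)" unfolding W_def
    by (rule sum.Sigma) auto
  also have "\<dots> = (\<Sum>w \<in> W. F (divisor_pair_split w))"
  proof (intro sum.cong refl, clarify)
    fix n x u assume "(n, x, u) \<in> W"
    hence h: "n > 0" "x dvd n" "u dvd n" by (auto simp: W_def)
    obtain \<alpha> \<beta> \<gamma> \<delta> where s: "divisor_pair_split (n, x, u) = (\<alpha>, \<beta>, \<gamma>, \<delta>)"
      by (cases "divisor_pair_split (n, x, u)") auto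
    show "1 / real n = F (divisor_pair_split (n, x, u))"
      using divisor_pair_split_props(5)[OF h s] by (simp add: s F_def del: of_nat_mult)
  qed
  also have "\<dots> = sum F (divisor_pair_split ` W)" by (simp add: sum.reindex[OF inj])
  also have "\<dots> \<le> sum F ({1..N} \<times> {1..N} \<times> {1..N} \<times> {1..N})"
  proof (rule sum_mono2)
    show "divisor_pair_split ` W \<subseteq> {1..N} \<times> {1..N} \<times> {1..N} \<times> {1..N}"
      by (rule image_subsetI, clarify, rule divisor_pair_split_bounded) (auto simp: W_def)
  qed (auto simp: F_def)
  also have "\<dots> = (\<Sum>(\<alpha>, \<beta>, \<gamma>, \<delta>) \<in> {1..N} \<times> {1..N} \<times> {1..N} \<times> {1..N}.
      (1 / real \<alpha>) * (1 / real \<beta>) * (1 / real \<gamma>) * (1 / real \<delta>))"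
    unfolding F_def by (intro sum.cong) auto
  also have "\<dots> = harm N ^ 4"
    by (simp only: sum_cartesian4) (simp add: harm_def inverse_eq_divide power4_eq_xxxx)
  finally show ?thesis .
qed

lemma power_powr: "(x::real) > 0 \<Longrightarrow> (x ^ n) powr r = x powr (real n * r)"
  by (simp add: powr_realpow[symmetric] powr_powr)

definition c2_term :: "nat \<times> nat \<times> nat \<times> nat \<Rightarrow> real" where
  "c2_term = (\<lambda>(n1, n2, n3, n4). real (divisor_count n1 * divisor_count n2 * divisor_count n3 * divisor_count n4)
       * (sqrt (real n1) + sqrt (real n2) + sqrt (real n3) + sqrt (real n4))
       / (real (n1 * n2 * n3 * n4)) powr (3/4))"

lemma c2_term_nonneg: "c2_term n \<ge> 0"
  unfolding c2_term_def by (simp split: prod.splits)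

lemma c2_term_swap: "c2_term (a, b, b, a) = c2_term (a, b, a, b)"
  unfolding c2_term_def by (simp add: mult_ac add_ac)

text \<open>On the diagonal \<open>(a, b, a, b)\<close> the summand splits into two products, each with one
  factor of the convergent-in-mean type \<open>d(n)\<^sup>2/n\<close> and one decaying like \<open>n\<^sup>-\<^sup>3\<^sup>/\<^sup>2 d(n)\<^sup>2\<close>.\<close>
lemma c2_term_diag_eq:
  fixes a b :: nat assumes "a > 0" "b > 0"
  defines "da \<equiv> real (divisor_count a) ^ 2" and "db \<equiv> real (divisor_count b) ^ 2"
  shows "c2_term (a, b, a, b)
      = 2 * (da / real a * (db * real b powr (-3/2)) + da * real a powr (-3/2) * (db / real b))"
proof -
  define A where "A = real a"
  define B where "B = real b"
  have pos: "A > 0" "B > 0" using assms by (auto simp: A_def B_def)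
  have "real (a * b * a * b) = (A * B) ^ 2" by (simp add: A_def B_def power2_eq_square)
  hence P: "real (a * b * a * b) powr (3/4) = A powr (3/2) * B powr (3/2)"
    using pos power_powr[of "A * B" 2 "3/4"] by (simp add: powr_mult)
  have "sqrt A / A powr (3/2) = 1 / A" "sqrt B / B powr (3/2) = 1 / B"
    using pos by (simp_all add: powr_half_sqrt[symmetric] powr_diff[symmetric] powr_minus_divide)
  hence "2 * da * db * (sqrt A + sqrt B) / (A powr (3/2) * B powr (3/2))
      = 2 * (da / A * (db * B powr (-3/2)) + da * A powr (-3/2) * (db / B))"
    using pos by (simp add: powr_minus_divide field_simps)
  thus ?thesis unfolding c2_term_def prod.case P
    by (simp add: A_def B_def da_def db_def power2_eq_square algebra_simps)
qed

lemma divisor_count_sq_decay: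
  fixes M :: real
  assumes M: "\<And>n. n > 0 \<Longrightarrow> real (divisor_count n) \<le> M * real n powr (1/8)" and n: "n > 0"
  shows "real (divisor_count n) ^ 2 * real n powr (-3/2) \<le> M ^ 2 * real n powr (-5/4)"
proof -
  have "real (divisor_count n) ^ 2 \<le> (M * real n powr (1/8)) ^ 2"
    using M[OF n] by (intro power_mono) auto
  also have "\<dots> = M ^ 2 * real n powr (1/4)"
    using n by (simp add: power_mult_distrib powr_power)
  finally have "real (divisor_count n) ^ 2 * real n powr (-3/2)
      \<le> M ^ 2 * real n powr (1/4) * real n powr (-3/2)" by (simp add: mult_right_mono)
  also have "\<dots> = M ^ 2 * real n powr (-5/4)" by (simp add: mult.assoc flip: powr_add)
  finally show ?thesis .
qed

lemma c2_term_diag_le: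
  fixes M :: real
  assumes M: "\<And>n. n > 0 \<Longrightarrow> real (divisor_count n) \<le> M * real n powr (1/8)"
    and "a > 0" "b > 0"
  shows "c2_term (a, b, a, b) \<le> 2 * M ^ 2 * (real (divisor_count a) ^ 2 / real a * real b powr (-5/4)
                                     + real a powr (-5/4) * (real (divisor_count b) ^ 2 / real b))"
proof -
  have "real (divisor_count a) ^ 2 / real a * (real (divisor_count b) ^ 2 * real b powr (-3/2))
      \<le> real (divisor_count a) ^ 2 / real a * (M ^ 2 * real b powr (-5/4))"
    using divisor_count_sq_decay[OF M \<open>b > 0\<close>] by (intro mult_left_mono) auto
  moreover have "real (divisor_count a) ^ 2 * real a powr (-3/2) * (real (divisor_count b) ^ 2 / real b)
      \<le> M ^ 2 * real a powr (-5/4) * (real (divisor_count b) ^ 2 / real b)"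
    using divisor_count_sq_decay[OF M \<open>a > 0\<close>] by (intro mult_right_mono) auto
  ultimately show ?thesis
    unfolding c2_term_diag_eq[OF assms(2,3)] by (simp add: algebra_simps)
qed

text \<open>Off the diagonal the crude bound \<open>d(n) \<ll> n\<^sup>1\<^sup>/\<^sup>8\<close> for all four divisor functions suffices.\<close>
lemma c2_term_le_powr:
  fixes M :: real
  assumes M: "\<And>n. n > 0 \<Longrightarrow> real (divisor_count n) \<le> M * real n powr (1/8)"
    and pos: "n1 > 0" "n2 > 0" "n3 > 0" "n4 > 0"
  shows "c2_term (n1, n2, n3, n4) \<le> M ^ 4 * (sqrt (real n1) + sqrt (real n2) + sqrt (real n3) + sqrt (real n4))
           * (real n1 powr (-5/8) * real n2 powr (-5/8) * real n3 powr (-5/8) * real n4 powr (-5/8))"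
proof -
  define P where "P = real (n1 * n2 * n3 * n4)"
  define S where "S = sqrt (real n1) + sqrt (real n2) + sqrt (real n3) + sqrt (real n4)"
  have P_pos: "P > 0" using pos by (simp add: P_def)
  have "real (divisor_count n1 * divisor_count n2 * divisor_count n3 * divisor_count n4)
      \<le> (M * real n1 powr (1/8)) * (M * real n2 powr (1/8)) * (M * real n3 powr (1/8))
         * (M * real n4 powr (1/8))"
    using M[OF pos(1)] M[OF pos(2)] M[OF pos(3)] M[OF pos(4)] by (simp only: of_nat_mult) (intro mult_mono, auto)
  also have "\<dots> = M ^ 4 * P powr (1/8)" by (simp add: P_def powr_mult power4_eq_xxxx mult_ac)
  finally have "c2_term (n1, n2, n3, n4) \<le> M ^ 4 * P powr (1/8) * S / P powr (3/4)"
    unfolding c2_term_def prod.case P_def[symmetric] S_def[symmetric]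
    by (intro divide_right_mono mult_right_mono) (auto simp: S_def)
  also have "\<dots> = M ^ 4 * S * (P powr (1/8) / P powr (3/4))" by simp
  also have "P powr (1/8) / P powr (3/4) = P powr (-5/8)" by (simp flip: powr_diff)
  finally show ?thesis by (simp add: S_def P_def powr_mult)
qed

text \<open>The elementary inequality \<open>(C + E)(CE)\<^sup>-\<^sup>s \<le> 2(C\<^sup>-\<^sup>s + E\<^sup>-\<^sup>s)\<close> for \<open>C, E \<ge> 1\<close>, \<open>s \<ge> 1\<close>:
  it removes the linear factor \<open>\<surd>n\<^sub>3 + \<surd>n\<^sub>4\<close> at the cost of one variable's decay.\<close>
lemma sum_mult_powr_le:
  fixes C E s :: real assumes "C \<ge> 1" "E \<ge> 1" "s \<ge> 1"
  shows "(C + E) * (C powr (-s) * E powr (-s)) \<le> 2 * (C powr (-s) + E powr (-s))"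
proof -
  have main: "(X + Y) * (X powr (-s) * Y powr (-s)) \<le> 2 * X powr (-s)" if "1 \<le> X" "X \<le> Y" for X Y :: real
  proof -
    have "Y powr (1 - s) \<le> Y powr 0" using that assms(3) by (intro powr_mono) auto
    hence Y_le: "Y powr (1 - s) \<le> 1" using that by simp
    have "(X + Y) * (X powr (-s) * Y powr (-s)) \<le> (2 * Y) * (X powr (-s) * Y powr (-s))"
      using that by (intro mult_right_mono) auto
    also have "\<dots> = 2 * X powr (-s) * Y powr (1 - s)"
      using that by (simp add: powr_diff powr_minus_divide field_simps)
    also have "\<dots> \<le> 2 * X powr (-s)" using Y_le by (simp add: mult_left_le)
    finally show ?thesis .
  qed
  show ?thesis
  proof (cases "C \<le> E")
    case True
    thus ?thesis using main[OF assms(1) True] by (smt (verit) powr_ge_zero)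
  next
    case False
    thus ?thesis using main[OF assms(2), of C] by (smt (verit) powr_ge_zero mult.commute)
  qed
qed

lemma sqrt_mult_square: "sqrt (real (q * x ^ 2)) = sqrt (real q) * real x"
  by (simp add: real_sqrt_mult)

lemma powr_mult_square:
  "q > 0 \<Longrightarrow> x > 0 \<Longrightarrow> real (q * x ^ 2) powr r = real q powr r * real x powr (2 * r)"
  by (simp add: powr_mult power_powr)

text \<open>Weight of a parametrised solution, product-shaped so that its sum over a box factorises.\<close>
definition param_weight :: "nat \<Rightarrow> nat \<Rightarrow> nat \<Rightarrow> nat \<Rightarrow> real" where
  "param_weight q a b c = real q powr (-2) * real a powr (-5/4) * real b powr (-5/4) * real c powr (-5/4)"

text \<open>Pointwise bound for a parametrised solution \<open>(qa\<^sup>2, qb\<^sup>2, qc\<^sup>2, qe\<^sup>2)\<close>, \<open>e = a + b - c\<close>: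
  the linear factor \<open>\<surd>q(a+b+c+e) = 2\<surd>q(c+e)\<close> is absorbed by \<open>sum_mult_powr_le\<close>.\<close>
lemma c2_term_param_le:
  fixes M :: real
  assumes M: "\<And>n. n > 0 \<Longrightarrow> real (divisor_count n) \<le> M * real n powr (1/8)"
    and pos: "q > 0" "a > 0" "b > 0" "c > 0" and c_lt: "c < a + b"
  shows "c2_term (param_quadruple (q, a, b, c))
           \<le> 4 * M ^ 4 * (param_weight q a b c + param_weight q a b (a + b - c))"
proof -
  define e where "e = a + b - c"
  have e_pos: "e > 0" using c_lt by (simp add: e_def)
  define Q where "Q = real q"
  define A where "A = real a"
  define B where "B = real b"
  define C where "C = real c"
  define E where "E = real e"
  define w where "w = (\<lambda>x::real. x powr (-5/4))"
  have Q_pos: "Q > 0" using pos by (simp add: Q_def)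
  have CE: "A + B = C + E" using c_lt by (simp add: A_def B_def C_def E_def e_def)
  have S: "sqrt (real (q * a ^ 2)) + sqrt (real (q * b ^ 2)) + sqrt (real (q * c ^ 2))
      + sqrt (real (q * e ^ 2)) = sqrt Q * (A + B + C + E)"
    unfolding sqrt_mult_square by (simp add: Q_def A_def B_def C_def E_def algebra_simps)
  have W: "real (q * x ^ 2) powr (-5/8) = Q powr (-5/8) * w (real x)" if "x > 0" for x
    using powr_mult_square[OF pos(1) that, of "-5/8"] by (simp add: Q_def w_def)
  have "c2_term (param_quadruple (q, a, b, c))
      = c2_term (q * a ^ 2, q * b ^ 2, q * c ^ 2, q * e ^ 2)"
    by (simp add: param_quadruple_def e_def)
  also have "\<dots> \<le> M ^ 4 * (sqrt Q * (A + B + C + E))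
         * ((Q powr (-5/8) * w A) * (Q powr (-5/8) * w B) * (Q powr (-5/8) * w C) * (Q powr (-5/8) * w E))"
    using c2_term_le_powr[OF M, of "q * a ^ 2" "q * b ^ 2" "q * c ^ 2" "q * e ^ 2"] pos e_pos
    unfolding S W[OF pos(2)] W[OF pos(3)] W[OF pos(4)] W[OF e_pos] by (simp add: A_def B_def C_def E_def)
  also have "\<dots> = 2 * M ^ 4 * (sqrt Q * (Q powr (-5/8)) ^ 4) * (w A * w B) * ((C + E) * (w C * w E))"
    unfolding CE by (simp add: algebra_simps power4_eq_xxxx)
  also have "sqrt Q * (Q powr (-5/8)) ^ 4 = Q powr (-2)"
    using Q_pos by (simp add: powr_half_sqrt[symmetric] powr_power flip: powr_add)
  also have "(C + E) * (w C * w E) \<le> 2 * (w C + w E)"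
    unfolding w_def using sum_mult_powr_le[of C E "5/4"] pos e_pos by (simp add: C_def E_def)
  hence "2 * M ^ 4 * Q powr (-2) * (w A * w B) * ((C + E) * (w C * w E))
      \<le> 2 * M ^ 4 * Q powr (-2) * (w A * w B) * (2 * (w C + w E))"
    by (intro mult_left_mono) (auto simp: w_def)
  also have "\<dots> = 4 * M ^ 4 * (param_weight q a b c + param_weight q a b e)"
    by (simp add: param_weight_def Q_def A_def B_def C_def E_def w_def algebra_simps)
  finally show ?thesis by (simp add: e_def)
qed

definition c2_solutions :: "nat \<Rightarrow> (nat \<times> nat \<times> nat \<times> nat) set" where
  "c2_solutions Z = {(n1, n2, n3, n4).
      n1 \<in> {1..Z} \<and> n2 \<in> {1..Z} \<and> n3 \<in> {1..Z} \<and> n4 \<in> {1..Z} \<and>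
      sqrt (real n1) + sqrt (real n2) = sqrt (real n3) + sqrt (real n4)}"

lemma c2_eq_sum: "c2 z = sum c2_term (c2_solutions (nat \<lfloor>z\<rfloor>))"
  unfolding c2_def c2_solutions_def c2_term_def ..

lemma c2_nonneg: "c2 z \<ge> 0"
  unfolding c2_eq_sum by (intro sum_nonneg c2_term_nonneg)

definition param_box :: "nat \<Rightarrow> (nat \<times> nat \<times> nat \<times> nat) set" where
  "param_box Z = {(q, a, b, c). q \<in> {1..Z} \<and> a \<in> {1..Z} \<and> b \<in> {1..Z} \<and> c \<in> {1..Z} \<and> c < a + b}"

lemma param_box_subset: "param_box Z \<subseteq> {1..Z} \<times> {1..Z} \<times> {1..Z} \<times> {1..Z}"
  by (auto simp: param_box_def)

lemma finite_param_box: "finite (param_box Z)"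
  using finite_subset[OF param_box_subset] by blast

text \<open>Every solution in \<open>[1, Z]\<^sup>4\<close> is diagonal, anti-diagonal, or parametrised from the box:
  the parameters \<open>q, a, b, c\<close> are bounded by \<open>n\<^sub>1 = qa\<^sup>2\<close>, \<open>n\<^sub>2 = qb\<^sup>2\<close>, \<open>n\<^sub>3 = qc\<^sup>2\<close>.\<close>
lemma c2_solutions_cover:
  "c2_solutions Z \<subseteq> (\<lambda>(a, b). (a, b, a, b)) ` ({1..Z} \<times> {1..Z})
                   \<union> (\<lambda>(a, b). (a, b, b, a)) ` ({1..Z} \<times> {1..Z})
                   \<union> param_quadruple ` param_box Z"
proof
  fix x assume "x \<in> c2_solutions Z"
  then obtain n1 n2 n3 n4 where x: "x = (n1, n2, n3, n4)"
    and n: "n1 \<in> {1..Z}" "n2 \<in> {1..Z}" "n3 \<in> {1..Z}" "n4 \<in> {1..Z}"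
    and eq: "sqrt (real n1) + sqrt (real n2) = sqrt (real n3) + sqrt (real n4)"
    by (auto simp: c2_solutions_def)
  have pos: "n1 > 0" "n2 > 0" "n3 > 0" "n4 > 0" using n by auto
  consider "n1 = n3 \<and> n2 = n4" | "n1 = n4 \<and> n2 = n3"
    | q a b c where "0 < q" "0 < a" "0 < b" "0 < c" "c < a + b"
        "(n1, n2, n3, n4) = param_quadruple (q, a, b, c)"
    using sqrt_sum_eq_cases[OF pos eq] by blast
  thus "x \<in> (\<lambda>(a, b). (a, b, a, b)) ` ({1..Z} \<times> {1..Z})
         \<union> (\<lambda>(a, b). (a, b, b, a)) ` ({1..Z} \<times> {1..Z}) \<union> param_quadruple ` param_box Z"
  proof cases
    case 1 thus ?thesis using n x by (auto intro!: image_eqI[of _ _ "(n1, n2)"])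
  next
    case 2 thus ?thesis using n x by (auto intro!: image_eqI[of _ _ "(n1, n2)"])
  next
    case (3 q a b c)
    hence "n1 = q * a ^ 2" "n2 = q * b ^ 2" "n3 = q * c ^ 2" by (simp_all add: param_quadruple_def)
    hence "q \<le> n1" "a \<le> n1" "b \<le> n2" "c \<le> n3"
      using 3 by (simp_all add: power2_eq_square)
    hence "(q, a, b, c) \<in> param_box Z" using 3 n unfolding param_box_def by auto
    thus ?thesis using 3 x by blast
  qed
qed

lemma sum_union_le:
  fixes f :: "'a \<Rightarrow> real"
  assumes "finite A" "finite B" "\<And>x. f x \<ge> 0"
  shows "sum f (A \<union> B) \<le> sum f A + sum f B"
  using sum_Un[OF assms(1,2), of f] sum_nonneg[of "A \<inter> B" f] assms(3) by simp

lemma c2_solutions_sum_le: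
  "sum c2_term (c2_solutions Z)
     \<le> 2 * (\<Sum>(a, b) \<in> {1..Z} \<times> {1..Z}. c2_term (a, b, a, b))
       + (\<Sum>v \<in> param_box Z. c2_term (param_quadruple v))"
proof -
  define D where "D = (\<lambda>(a, b). (a, b, a, b)) ` ({1..Z} \<times> {1..Z})"
  define D' where "D' = (\<lambda>(a, b). (a, b, b, a)) ` ({1..Z} \<times> {1..Z})"
  define P where "P = param_quadruple ` param_box Z"
  have fin: "finite D" "finite D'" "finite P"
    unfolding D_def D'_def P_def using finite_param_box by auto
  have "sum c2_term (c2_solutions Z) \<le> sum c2_term (D \<union> D' \<union> P)"
    using c2_solutions_cover[of Z] fin by (intro sum_mono2) (auto simp: D_def D'_def P_def c2_term_nonneg)
  also have "\<dots> \<le> sum c2_term D + sum c2_term D' + sum c2_term P"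
    using sum_union_le[of "D \<union> D'" P c2_term] sum_union_le[of D D' c2_term] fin c2_term_nonneg by simp
  also have "sum c2_term D \<le> (\<Sum>(a, b) \<in> {1..Z} \<times> {1..Z}. c2_term (a, b, a, b))"
  proof -
    have "sum c2_term D \<le> sum (c2_term \<circ> (\<lambda>(a, b). (a, b, a, b))) ({1..Z} \<times> {1..Z})"
      unfolding D_def by (rule sum_image_le) (auto simp: c2_term_nonneg)
    thus ?thesis by (simp add: case_prod_beta' comp_def)
  qed
  also have "sum c2_term D' \<le> (\<Sum>(a, b) \<in> {1..Z} \<times> {1..Z}. c2_term (a, b, a, b))"
  proof -
    have "sum c2_term D' \<le> sum (c2_term \<circ> (\<lambda>(a, b). (a, b, b, a))) ({1..Z} \<times> {1..Z})"
      unfolding D'_def by (rule sum_image_le) (auto simp: c2_term_nonneg)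
    also have "\<dots> = (\<Sum>(a, b) \<in> {1..Z} \<times> {1..Z}. c2_term (a, b, a, b))"
      by (intro sum.cong) (auto simp: c2_term_swap)
    finally show ?thesis .
  qed
  also have "sum c2_term P \<le> (\<Sum>v \<in> param_box Z. c2_term (param_quadruple v))"
    unfolding P_def comp_def[of c2_term param_quadruple, symmetric]
    by (rule sum_image_le) (auto simp: finite_param_box c2_term_nonneg)
  finally show ?thesis by simp
qed

text \<open>Diagonal contribution: \<open>\<ll> (\<Sum> d(n)\<^sup>2/n)(\<Sum> n\<^sup>-\<^sup>5\<^sup>/\<^sup>4) \<ll> log\<^sup>4 Z\<close>.\<close>
lemma diag_sum_le:
  fixes M P :: real
  assumes M: "\<And>n. n > 0 \<Longrightarrow> real (divisor_count n) \<le> M * real n powr (1/8)"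
    and P: "\<And>N. (\<Sum>k = 1..N. real k powr (-5/4)) \<le> P"
  shows "(\<Sum>(a, b) \<in> {1..Z} \<times> {1..Z}. c2_term (a, b, a, b)) \<le> 4 * M ^ 2 * P * harm Z ^ 4"
proof -
  define f where "f = (\<lambda>n. real (divisor_count n) ^ 2 / real n)"
  define g where "g = (\<lambda>n::nat. real n powr (-5/4))"
  have "(\<Sum>(a, b) \<in> {1..Z} \<times> {1..Z}. c2_term (a, b, a, b))
      \<le> (\<Sum>(a, b) \<in> {1..Z} \<times> {1..Z}. 2 * M ^ 2 * (f a * g b + g a * f b))"
    using c2_term_diag_le[OF M] by (intro sum_mono) (auto simp: f_def g_def)
  also have "\<dots> = 2 * M ^ 2 * ((\<Sum>(a, b) \<in> {1..Z} \<times> {1..Z}. f a * g b)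
                              + (\<Sum>(a, b) \<in> {1..Z} \<times> {1..Z}. g a * f b))"
    by (simp only: sum.distrib[symmetric] sum_distrib_left case_prod_unfold)
  also have "\<dots> = 2 * M ^ 2 * (2 * (sum f {1..Z} * sum g {1..Z}))"
    unfolding sum_cartesian2 by simp
  also have "\<dots> \<le> 2 * M ^ 2 * (2 * (harm Z ^ 4 * P))"
    using sum_divisor_count_sq_le[of Z] P[of Z]
    by (intro mult_left_mono mult_mono) (auto simp: f_def g_def intro!: sum_nonneg)
  finally show ?thesis by (simp add: mult_ac)
qed

lemma param_weight_box_sum_le:
  fixes P P' :: real
  assumes P: "\<And>N. (\<Sum>k = 1..N. real k powr (-5/4)) \<le> P"
    and P': "\<And>N. (\<Sum>k = 1..N. real k powr (-2)) \<le> P'"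
  shows "(\<Sum>(q, a, b, c) \<in> {1..Z} \<times> {1..Z} \<times> {1..Z} \<times> {1..K}. param_weight q a b c) \<le> P' * P ^ 3"
proof -
  define g where "g = (\<lambda>n::nat. real n powr (-5/4))"
  define h where "h = (\<lambda>n::nat. real n powr (-2))"
  have sums: "0 \<le> sum g {1..N}" "sum g {1..N} \<le> P" "0 \<le> sum h {1..N}" "sum h {1..N} \<le> P'" for N
    using P P' by (auto simp: g_def h_def intro!: sum_nonneg)
  have "0 \<le> P" "0 \<le> P'" using sums(1,2)[of 0] sums(3,4)[of 0] by linarith+
  have "(\<Sum>(q, a, b, c) \<in> {1..Z} \<times> {1..Z} \<times> {1..Z} \<times> {1..K}. param_weight q a b c)
      = sum h {1..Z} * sum g {1..Z} * sum g {1..Z} * sum g {1..K}"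
    unfolding param_weight_def g_def h_def by (rule sum_cartesian4)
  also have "\<dots> \<le> P' * P * P * P" using sums \<open>0 \<le> P\<close> \<open>0 \<le> P'\<close> by (intro mult_mono) auto
  finally show ?thesis by (simp add: power3_eq_cube mult_ac)
qed

text \<open>Parametrised contribution: bounded independently of \<open>Z\<close>.  The reflection
  \<open>c \<mapsto> a + b - c\<close> maps the box injectively into a box of twice the length.\<close>
lemma param_sum_le:
  fixes M P P' :: real
  assumes M: "\<And>n. n > 0 \<Longrightarrow> real (divisor_count n) \<le> M * real n powr (1/8)"
    and P: "\<And>N. (\<Sum>k = 1..N. real k powr (-5/4)) \<le> P"
    and P': "\<And>N. (\<Sum>k = 1..N. real k powr (-2)) \<le> P'"
  shows "(\<Sum>v \<in> param_box Z. c2_term (param_quadruple v)) \<le> 8 * M ^ 4 * P' * P ^ 3"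
proof -
  define G where "G = (\<lambda>(q, a, b, c). param_weight q a b c)"
  define r where "r = (\<lambda>(q::nat, a::nat, b::nat, c::nat). (q, a, b, a + b - c))"
  have G_nonneg: "G v \<ge> 0" for v by (auto simp: G_def param_weight_def split: prod.splits)
  have "(\<Sum>v \<in> param_box Z. c2_term (param_quadruple v))
      \<le> (\<Sum>v \<in> param_box Z. 4 * M ^ 4 * (G v + G (r v)))"
    using c2_term_param_le[OF M] by (intro sum_mono) (auto simp: param_box_def G_def r_def)
  also have "\<dots> = 4 * M ^ 4 * (sum G (param_box Z) + sum G (r ` param_box Z))"
  proof -
    have "inj_on r (param_box Z)" by (rule inj_onI) (auto simp: r_def param_box_def)
    thus ?thesis by (simp add: sum.reindex comp_def sum_distrib_left sum.distrib distrib_left)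
  qed
  also have "sum G (param_box Z) \<le> P' * P ^ 3"
    using param_weight_box_sum_le[OF P P', of Z Z] param_box_subset G_nonneg
      sum_mono2[of "{1..Z} \<times> {1..Z} \<times> {1..Z} \<times> {1..Z}" "param_box Z" G]
    by (simp add: G_def)
  also have "sum G (r ` param_box Z) \<le> P' * P ^ 3"
  proof -
    have "r ` param_box Z \<subseteq> {1..Z} \<times> {1..Z} \<times> {1..Z} \<times> {1..2 * Z}"
      by (auto simp: r_def param_box_def)
    thus ?thesis using param_weight_box_sum_le[OF P P', of Z "2 * Z"] G_nonneg
      sum_mono2[of "{1..Z} \<times> {1..Z} \<times> {1..Z} \<times> {1..2 * Z}" "r ` param_box Z" G]
      by (simp add: G_def)
  qed
  finally show ?thesis by (simp add: mult_left_mono)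
qed

lemma c2_le:
  fixes M P P' :: real
  assumes M: "\<And>n. n > 0 \<Longrightarrow> real (divisor_count n) \<le> M * real n powr (1/8)"
    and P: "\<And>N. (\<Sum>k = 1..N. real k powr (-5/4)) \<le> P"
    and P': "\<And>N. (\<Sum>k = 1..N. real k powr (-2)) \<le> P'"
  shows "c2 z \<le> 8 * M ^ 2 * P * harm (nat \<lfloor>z\<rfloor>) ^ 4 + 8 * M ^ 4 * P' * P ^ 3"
  using c2_solutions_sum_le[of "nat \<lfloor>z\<rfloor>"] diag_sum_le[OF M P, of "nat \<lfloor>z\<rfloor>"]
    param_sum_le[OF M P P', of "nat \<lfloor>z\<rfloor>"]
  unfolding c2_eq_sum by linarith

theorem lemma4p3:
  shows "\<exists>C>0. \<forall>z::real. z \<ge> 10 \<longrightarrow> \<bar>c2 z\<bar> \<le> C * (ln z) ^ 4"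
proof -
  obtain M :: real where "M > 0"
    and M: "\<And>n. n > 0 \<Longrightarrow> real (divisor_count n) \<le> M * real n powr (1/8)"
    using divisor_count_le_root8 by blast
  obtain P where P: "\<And>N. (\<Sum>k = 1..N. real k powr (-5/4)) \<le> P"
    using partial_zeta_bounded[of "5/4"] by auto
  obtain P' where P': "\<And>N. (\<Sum>k = 1..N. real k powr (-2)) \<le> P'"
    using partial_zeta_bounded[of 2] by auto
  have "P \<ge> 1" "P' \<ge> 1" using P[of 1] P'[of 1] by simp_all
  define A where "A = 8 * M ^ 2 * P"
  define B where "B = 8 * M ^ 4 * P' * P ^ 3"
  have "A > 0" "B > 0" unfolding A_def B_def using \<open>M > 0\<close> \<open>P \<ge> 1\<close> \<open>P' \<ge> 1\<close> by simp_all
  have "\<bar>c2 z\<bar> \<le> (16 * A + B) * ln z ^ 4" if "z \<ge> 10" for z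
    using c2_le[OF M P P', of z] c2_nonneg[of z] harm_bound_le_log4[of A B z] \<open>A > 0\<close> \<open>B > 0\<close> that
    unfolding A_def B_def by simp
  moreover have "16 * A + B > 0" using \<open>A > 0\<close> \<open>B > 0\<close> by simp
  ultimately show ?thesis by blast
qed

end
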